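(* There exists a continuous, differentiable curve $s$ in $\mathbb{R}^2$ of finite length with no cross-over (that is, $t\mapsto s(t)$ is one-to-one) such that, for every $R>0$, $s$ is not $R$-monotone.
   Context: A closed ball is a set $\{x:\|x-a\|\le \rho\}$ with center $a$ and radius $\rho$. For $R>0$, a curve $s$ (considered with its arc-length parametrization) is called $R$-monotone if the inverse image under $s$ of every closed ball of radius at most $R$ is a connected subset of the parameter domain. *)

theory Defs
  imports "HOL-Analysis.Analysis"
begin

definition polygonal_length :: "(real \<Rightarrow> 'a::metric_space) \<Rightarrow> real list \<Rightarrow> real" where
  "polygonal_length s ts = sum_list (map (\<lambda>(x, y). dist (s x) (s y)) (zip ts (tl ts)))"

definition polygon_lengths :: "(real \<Rightarrow> 'a::metric_space) \<Rightarrow> real \<Rightarrow> real \<Rightarrow> real set" where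
  "polygon_lengths s a b =
     {polygonal_length s ts | ts. ts \<noteq> [] \<and> hd ts = a \<and> last ts = b \<and> sorted ts}"

text \<open>Arc length of s restricted to [a,b] (meaningful when rectifiable).\<close>
definition curve_length :: "(real \<Rightarrow> 'a::metric_space) \<Rightarrow> real \<Rightarrow> real \<Rightarrow> real" where
  "curve_length s a b = Sup (polygon_lengths s a b)"

definition rectifiable_on :: "(real \<Rightarrow> 'a::metric_space) \<Rightarrow> real \<Rightarrow> real \<Rightarrow> bool" where
  "rectifiable_on s a b \<longleftrightarrow> bdd_above (polygon_lengths s a b)"

definition arc_length_param :: "(real \<Rightarrow> 'a::metric_space) \<Rightarrow> real \<Rightarrow> bool" where
  "arc_length_param s L \<longleftrightarrow>
     (\<forall>a b. 0 \<le> a \<and> a \<le> b \<and> b \<le> L \<longrightarrow>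
        rectifiable_on s a b \<and> curve_length s a b = b - a)"

definition R_monotone :: "real \<Rightarrow> (real \<Rightarrow> 'a::metric_space) \<Rightarrow> real \<Rightarrow> bool" where
  "R_monotone R s L \<longleftrightarrow>
     (\<forall>c \<rho>. 0 \<le> \<rho> \<and> \<rho> \<le> R \<longrightarrow> connected {t \<in> {0..L}. s t \<in> cball c \<rho>})"

end

(*
  Take the unit-speed curve s with velocity (sqrt (1 - w t^2), w t), where w t = t sin (pi / t) / 2.
  Its height has a strict local maximum at each t = 1 / (2 k): at the parameters 1 / (2 k +- 5/6),
  which are O(1 / k^2) away, the height is lower by at least 1 / (384 k^3), while s itself has moved
  by at most O(1 / k^2) since it is 1-Lipschitz. The closed ball of radius D = 200 / k centred at
  distance D below s (1 / (2 k)) therefore contains the two neighbouring points but not s (1 / (2 k)),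
  so its inverse image is disconnected; and D can be made smaller than any given R.
*)
theory Submission
  imports Defs
begin

section \<open>Arc length of unit-speed curves\<close>

lemma polygonal_length_singleton [simp]: "polygonal_length s [x] = 0"
  by (simp add: polygonal_length_def)

lemma polygonal_length_Cons:
  "ts \<noteq> [] \<Longrightarrow> polygonal_length s (x # ts) = dist (s x) (s (hd ts)) + polygonal_length s ts"
  by (cases ts) (simp_all add: polygonal_length_def)

lemma polygonal_length_map_upt:
  "polygonal_length s (map g [0..<Suc n]) = (\<Sum>i<n. dist (s (g i)) (s (g (Suc i))))"
proof (induction n arbitrary: g)
  case 0
  then show ?case by simp
next
  case (Suc n)
  have "map g [0..<Suc (Suc n)] = g 0 # map (g \<circ> Suc) [0..<Suc n]"
    by (simp add: map_upt_Suc del: upt_Suc)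
  then show ?case
    by (simp add: polygonal_length_Cons Suc.IH hd_map sum.lessThan_Suc_shift
        del: upt_Suc sum.lessThan_Suc)
qed

lemma sorted_mem_between_hd_last: "sorted xs \<Longrightarrow> z \<in> set xs \<Longrightarrow> hd xs \<le> z \<and> z \<le> last xs"
proof (induction xs)
  case (Cons x xs)
  then show ?case by (cases "xs = []") auto
qed simp

lemma polygonal_length_le_of_lipschitz:
  assumes lip: "\<And>x y. x \<in> {a..b} \<Longrightarrow> y \<in> {a..b} \<Longrightarrow> x \<le> y \<Longrightarrow> dist (s x) (s y) \<le> y - x"
    and "sorted (x # ts)" "set (x # ts) \<subseteq> {a..b}"
  shows "polygonal_length s (x # ts) \<le> last (x # ts) - x"
  using assms(2,3)
proof (induction ts arbitrary: x)
  case (Cons y ts)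
  have "polygonal_length s (y # ts) \<le> last (y # ts) - y"
    using Cons by auto
  moreover have "dist (s x) (s y) \<le> y - x"
    using Cons.prems by (intro lip) auto
  ultimately show ?case by (simp add: polygonal_length_Cons)
qed simp

lemma polygon_lengths_le_of_lipschitz:
  assumes "\<And>x y. x \<in> {a..b} \<Longrightarrow> y \<in> {a..b} \<Longrightarrow> x \<le> y \<Longrightarrow> dist (s x) (s y) \<le> y - x"
    and "len \<in> polygon_lengths s a b"
  shows "len \<le> b - a"
proof -
  obtain ts where ts: "len = polygonal_length s ts" "ts \<noteq> []" "hd ts = a" "last ts = b" "sorted ts"
    using assms(2) unfolding polygon_lengths_def by blast
  then obtain x ts' where x: "ts = x # ts'"
    by (cases ts) auto
  have "set ts \<subseteq> {a..b}"
    using sorted_mem_between_hd_last[of ts] ts by auto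
  then have "polygonal_length s (x # ts') \<le> last (x # ts') - x"
    using ts x by (intro polygonal_length_le_of_lipschitz[OF assms(1)]) auto
  with ts x show ?thesis
    by (cases "ts' = []") auto
qed

lemma uniform_partition_in_polygon_lengths:
  assumes "a < b" "0 < n"
  shows "polygonal_length s (map (\<lambda>i. a + real i * (b - a) / real n) [0..<Suc n])
    \<in> polygon_lengths s a b"
  unfolding polygon_lengths_def
proof (intro CollectI exI conjI refl)
  show "sorted (map (\<lambda>i. a + real i * (b - a) / real n) [0..<Suc n])"
    unfolding sorted_map using assms
    by (intro sorted_wrt_mono_rel[OF _ sorted_upt]) (auto intro: divide_right_mono mult_right_mono)
qed (use assms in \<open>auto simp: last_map hd_map simp del: upt_Suc\<close>)

lemma dist_le_of_speed_le_1:
  fixes f :: "real \<Rightarrow> 'a::real_normed_vector"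
  assumes der: "\<And>t. t \<in> {a..b} \<Longrightarrow> (f has_vector_derivative f' t) (at t within {a..b})"
    and speed: "\<And>t. t \<in> {a..b} \<Longrightarrow> norm (f' t) \<le> 1"
    and "x \<in> {a..b}" "y \<in> {a..b}"
  shows "dist (f x) (f y) \<le> \<bar>y - x\<bar>"
proof -
  have "norm (f y - f x) \<le> 1 * norm (y - x)"
  proof (rule differentiable_bound[where f'="\<lambda>t h. h *\<^sub>R f' t"])
    show "(f has_derivative (\<lambda>h. h *\<^sub>R f' t)) (at t within {a..b})" if "t \<in> {a..b}" for t
      using der[OF that] by (simp add: has_vector_derivative_def)
    show "onorm (\<lambda>h. h *\<^sub>R f' t) \<le> 1" if "t \<in> {a..b}" for t
      using speed[OF that] by (intro onorm_le) (simp add: mult_left_le)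
  qed (use assms in auto)
  then show ?thesis by (simp add: dist_norm norm_minus_commute)
qed

lemma dist_ge_of_unit_speed:
  fixes f :: "real \<Rightarrow> 'a::real_normed_vector"
  assumes der: "\<And>t. t \<in> {a..b} \<Longrightarrow> (f has_vector_derivative f' t) (at t within {a..b})"
    and cont: "continuous_on {a..b} f'"
    and speed: "\<And>t. t \<in> {a..b} \<Longrightarrow> norm (f' t) = 1"
    and "z < 1"
  obtains d where "d > 0" and "\<And>x y. x \<in> {a..b} \<Longrightarrow> y \<in> {a..b} \<Longrightarrow> x \<le> y \<Longrightarrow> y - x < d \<Longrightarrow>
    z * (y - x) \<le> dist (f x) (f y)"
proof -
  have "uniformly_continuous_on {a..b} f'"
    by (rule compact_uniformly_continuous[OF cont]) simp
  then obtain d where "d > 0" and d: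
    "\<And>x x'. x \<in> {a..b} \<Longrightarrow> x' \<in> {a..b} \<Longrightarrow> dist x' x < d \<Longrightarrow> dist (f' x') (f' x) < 1 - z"
    unfolding uniformly_continuous_on_def using \<open>z < 1\<close> by (metis diff_gt_0_iff_gt)
  have "z * (y - x) \<le> dist (f x) (f y)"
    if xy: "x \<in> {a..b}" "y \<in> {a..b}" "x \<le> y" "y - x < d" for x y
  proof -
    have "norm (f y - f x - (y - x) *\<^sub>R f' x) \<le> norm (y - x) * (1 - z)"
    proof (rule vector_differentiable_bound_linearization[where S="{x..y}"])
      fix t assume t: "t \<in> {x..y}"
      then have "t \<in> {a..b}" using xy by auto
      show "(f has_vector_derivative f' t) (at t within {x..y})"
        using der[OF \<open>t \<in> {a..b}\<close>] xy by (auto intro: has_vector_derivative_within_subset)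
      show "norm (f' t - f' x) \<le> 1 - z"
        using d[OF xy(1) \<open>t \<in> {a..b}\<close>] t xy by (auto simp: dist_norm)
    qed (use xy in \<open>auto simp: closed_segment_eq_real_ivl\<close>)
    moreover have "norm ((y - x) *\<^sub>R f' x) = y - x"
      using speed[OF xy(1)] xy by simp
    ultimately show ?thesis
      using norm_triangle_ineq2[of "(y - x) *\<^sub>R f' x" "f y - f x"] xy
      by (simp add: dist_norm norm_minus_commute algebra_simps)
  qed
  with \<open>d > 0\<close> show ?thesis by (rule that)
qed

lemma polygon_length_ge_of_unit_speed:
  fixes f :: "real \<Rightarrow> 'a::real_normed_vector"
  assumes der: "\<And>t. t \<in> {a..b} \<Longrightarrow> (f has_vector_derivative f' t) (at t within {a..b})"
    and cont: "continuous_on {a..b} f'"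
    and speed: "\<And>t. t \<in> {a..b} \<Longrightarrow> norm (f' t) = 1"
    and "a < b" "z < 1"
  obtains len where "len \<in> polygon_lengths f a b" "z * (b - a) \<le> len"
proof -
  obtain d where "d > 0" and d: "\<And>x y. x \<in> {a..b} \<Longrightarrow> y \<in> {a..b} \<Longrightarrow> x \<le> y \<Longrightarrow> y - x < d \<Longrightarrow>
    z * (y - x) \<le> dist (f x) (f y)"
    using dist_ge_of_unit_speed[OF der cont speed \<open>z < 1\<close>] by blast
  obtain n :: nat where n: "(b - a) / d < real n"
    using reals_Archimedean2 by blast
  then have "0 < n"
    using \<open>d > 0\<close> \<open>a < b\<close> by (cases n) (auto simp: field_simps)
  with n have "(b - a) / real n < d"
    using \<open>d > 0\<close> by (simp add: field_simps)
  define g where "g i = a + real i * (b - a) / real n" for i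
  have g_mem: "g i \<in> {a..b}" if "i \<le> n" for i
  proof -
    have "real i * (b - a) / real n \<le> real n * (b - a) / real n"
      using that \<open>a < b\<close> by (intro divide_right_mono mult_right_mono) auto
    then show ?thesis using \<open>0 < n\<close> \<open>a < b\<close> by (auto simp: g_def)
  qed
  have g_step: "g (Suc i) - g i = (b - a) / real n" for i
    by (simp add: g_def add_divide_distrib[symmetric] algebra_simps)
  have "z * (b - a) = (\<Sum>i<n. z * ((b - a) / real n))"
    using \<open>0 < n\<close> by simp
  also have "\<dots> \<le> (\<Sum>i<n. dist (f (g i)) (f (g (Suc i))))"
  proof (rule sum_mono)
    fix i assume "i \<in> {..<n}"
    moreover have "g i \<le> g (Suc i)"
      using g_step[of i] divide_nonneg_nonneg[of "b - a" "real n"] \<open>a < b\<close> by linarith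
    ultimately show "z * ((b - a) / real n) \<le> dist (f (g i)) (f (g (Suc i)))"
      using d[of "g i" "g (Suc i)"] g_mem[of i] g_mem[of "Suc i"] g_step[of i]
        \<open>(b - a) / real n < d\<close> by simp
  qed
  also have "\<dots> = polygonal_length f (map g [0..<Suc n])"
    by (simp add: polygonal_length_map_upt del: upt_Suc)
  finally show ?thesis
    using that uniform_partition_in_polygon_lengths[OF \<open>a < b\<close> \<open>0 < n\<close>, of f]
    unfolding g_def by blast
qed

lemma arc_length_param_of_unit_speed:
  fixes f :: "real \<Rightarrow> 'a::real_normed_vector"
  assumes der: "\<And>t. t \<in> {0..L} \<Longrightarrow> (f has_vector_derivative f' t) (at t within {0..L})"
    and cont: "continuous_on {0..L} f'"
    and speed: "\<And>t. t \<in> {0..L} \<Longrightarrow> norm (f' t) = 1"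
  shows "arc_length_param f L"
  unfolding arc_length_param_def
proof (intro allI impI)
  fix a b :: real assume ab: "0 \<le> a \<and> a \<le> b \<and> b \<le> L"
  then have sub: "{a..b} \<subseteq> {0..L}" by auto
  have der': "(f has_vector_derivative f' t) (at t within {a..b})" if "t \<in> {a..b}" for t
    using der[of t] that sub by (auto intro: has_vector_derivative_within_subset)
  have cont': "continuous_on {a..b} f'"
    using cont sub by (rule continuous_on_subset)
  have speed': "norm (f' t) = 1" if "t \<in> {a..b}" for t
    using speed that sub by auto
  have lip: "dist (f x) (f y) \<le> y - x" if "x \<in> {a..b}" "y \<in> {a..b}" "x \<le> y" for x y
    using dist_le_of_speed_le_1[OF der' _ that(1,2)] speed' that(3) by simp
  have ub: "len \<le> b - a" if "len \<in> polygon_lengths f a b" for len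
    using polygon_lengths_le_of_lipschitz[OF lip that] by simp
  have two_point: "dist (f a) (f b) \<in> polygon_lengths f a b"
    unfolding polygon_lengths_def using ab
    by (intro CollectI exI[of _ "[a, b]"]) (auto simp: polygonal_length_def)
  have "Sup (polygon_lengths f a b) = b - a"
  proof (rule cSup_eq_non_empty)
    fix y assume y: "\<And>len. len \<in> polygon_lengths f a b \<Longrightarrow> len \<le> y"
    show "b - a \<le> y"
    proof (rule field_le_mult_one_interval)
      fix z :: real assume "0 < z" "z < 1"
      show "z * (b - a) \<le> y"
      proof (cases "a = b")
        case True
        then show ?thesis using y[OF two_point] by simp
      next
        case False
        with ab obtain len where "len \<in> polygon_lengths f a b" "z * (b - a) \<le> len"
          using polygon_length_ge_of_unit_speed[OF der' cont' speed' _ \<open>z < 1\<close>] by force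
        then show ?thesis using y by force
      qed
    qed
  qed (use two_point ub in auto)
  then show "rectifiable_on f a b \<and> curve_length f a b = b - a"
    unfolding rectifiable_on_def curve_length_def bdd_above_def using ub by blast
qed

section \<open>Caps and R-monotonicity\<close>

lemma dist_lt_of_cap:
  fixes x y e :: "'a::real_inner"
  assumes "norm e = 1" "0 < D" and cap: "(dist x y)\<^sup>2 < D * ((y - x) \<bullet> e)"
  shows "dist x (y - D *\<^sub>R e) < D"
proof -
  have "(dist x (y - D *\<^sub>R e))\<^sup>2 = (norm ((x - y) + D *\<^sub>R e))\<^sup>2"
    by (simp add: dist_norm algebra_simps)
  also have "\<dots> = (norm (x - y))\<^sup>2 + 2 * ((x - y) \<bullet> (D *\<^sub>R e)) + (norm (D *\<^sub>R e))\<^sup>2"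
    using dot_norm[of "x - y" "D *\<^sub>R e"] by simp
  also have "\<dots> = (dist x y)\<^sup>2 - 2 * D * ((y - x) \<bullet> e) + D\<^sup>2"
    using \<open>norm e = 1\<close> by (simp add: dist_norm inner_diff_left algebra_simps)
  also have "\<dots> < D\<^sup>2"
    using cap zero_le_power2[of "dist x y"] by linarith
  finally show ?thesis
    using \<open>0 < D\<close> by (simp add: power2_less_imp_less)
qed

lemma not_R_monotone_if_cap:
  fixes s :: "real \<Rightarrow> 'a::real_inner"
  assumes "norm e = 1" "0 < D" "D \<le> R"
    and "0 \<le> p" "p < t" "t < q" "q \<le> L"
    and "(dist (s p) (s t))\<^sup>2 < D * ((s t - s p) \<bullet> e)"
    and "(dist (s q) (s t))\<^sup>2 < D * ((s t - s q) \<bullet> e)"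
  shows "\<not> R_monotone R s L"
proof
  assume mono: "R_monotone R s L"
  define c where "c = s t - D *\<^sub>R e"
  define \<rho> where "\<rho> = max (dist (s p) c) (dist (s q) c)"
  have "dist (s p) c < D"
    unfolding c_def using assms(1,2,8) by (rule dist_lt_of_cap)
  moreover have "dist (s q) c < D"
    unfolding c_def using assms(1,2,9) by (rule dist_lt_of_cap)
  moreover have "dist (s t) c = D"
    using assms(1,2) by (simp add: c_def dist_norm)
  ultimately have "\<rho> < D" "\<rho> < dist c (s t)"
    by (simp_all add: \<rho>_def dist_commute)
  have "0 \<le> \<rho>"
    by (simp add: \<rho>_def le_max_iff_disj)
  let ?S = "{u \<in> {0..L}. s u \<in> cball c \<rho>}"
  have "connected ?S"
    using mono \<open>0 \<le> \<rho>\<close> \<open>\<rho> < D\<close> \<open>D \<le> R\<close> unfolding R_monotone_def by simp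
  moreover have "p \<in> ?S" "q \<in> ?S"
    using assms(4-7) by (simp_all add: \<rho>_def dist_commute)
  ultimately have "t \<in> ?S"
    using \<open>p < t\<close> \<open>t < q\<close> by (intro connectedD_interval[of ?S p q t]) simp_all
  then show False
    using \<open>\<rho> < dist c (s t)\<close> by simp
qed

section \<open>An oscillating unit-speed curve\<close>

lemma increment_ge_of_deriv_ge:
  fixes F :: "real \<Rightarrow> real"
  assumes der: "\<And>t. t \<in> S \<Longrightarrow> (F has_real_derivative F' t) (at t within S)"
    and "x < y" "{x..y} \<subseteq> S"
    and "\<And>t. t \<in> {x<..<y} \<Longrightarrow> c \<le> F' t"
  shows "(y - x) * c \<le> F y - F x"
proof -
  have "(F has_derivative (*) (F' t)) (at t within {x..y})" if "x \<le> t" "t \<le> y" for t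
    using DERIV_subset[OF der \<open>{x..y} \<subseteq> S\<close>] that \<open>{x..y} \<subseteq> S\<close>
    by (auto simp: has_field_derivative_def)
  from mvt_simple[OF \<open>x < y\<close> this] obtain t where "t \<in> {x<..<y}" "F y - F x = F' t * (y - x)"
    by blast
  with assms(2,4) show ?thesis
    by (simp add: mult.commute mult_left_mono)
qed

lemma increment_le_of_deriv_le:
  fixes F :: "real \<Rightarrow> real"
  assumes "\<And>t. t \<in> S \<Longrightarrow> (F has_real_derivative F' t) (at t within S)"
    and "x < y" "{x..y} \<subseteq> S"
    and "\<And>t. t \<in> {x<..<y} \<Longrightarrow> F' t \<le> c"
  shows "F y - F x \<le> (y - x) * c"
proof -
  have "(y - x) * (- c) \<le> (- F y) - (- F x)"
    by (rule increment_ge_of_deriv_ge[OF _ assms(2,3)]) (use assms(1,4) in \<open>auto intro: DERIV_minus\<close>)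
  then show ?thesis
    by simp
qed

lemma vector_2_eq_axis: "(vector [a, b] :: real^2) = a *\<^sub>R axis 1 1 + b *\<^sub>R axis 2 1"
  by (simp add: vec_eq_iff forall_2 axis_def)

lemma has_vector_derivative_vector_2:
  assumes "(f has_real_derivative f') (at x within S)" "(g has_real_derivative g') (at x within S)"
  shows "((\<lambda>t. vector [f t, g t] :: real^2) has_vector_derivative vector [f', g']) (at x within S)"
  unfolding vector_2_eq_axis using assms by (auto intro!: derivative_eq_intros)

lemma norm_vector_2: "norm (vector [a, b] :: real^2) = sqrt (a\<^sup>2 + b\<^sup>2)"
  by (simp add: norm_vec_def L2_set_def UNIV_2 power2_eq_square)

definition osc :: "real \<Rightarrow> real" where
  "osc t = t * sin (pi / t) / 2"
  \<comment> \<open>at 0 the junk value pi / 0 = 0 gives osc 0 = 0, the continuous extension\<close>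

definition osc_curve :: "real \<Rightarrow> real^2" where
  "osc_curve t = vector [integral {0..t} (\<lambda>u. sqrt (1 - (osc u)\<^sup>2)), integral {0..t} osc]"

lemma abs_osc_le: "\<bar>osc t\<bar> \<le> \<bar>t\<bar> / 2"
proof -
  have "\<bar>t * sin (pi / t)\<bar> \<le> \<bar>t\<bar> * 1"
    unfolding abs_mult by (intro mult_left_mono) auto
  then show ?thesis
    by (simp add: osc_def)
qed

lemma isCont_osc: "isCont osc t"
proof (cases "t = 0")
  case True
  have "(osc \<longlongrightarrow> 0) (at 0)"
  proof (rule Lim_null_comparison)
    show "\<forall>\<^sub>F u in at 0. norm (osc u) \<le> \<bar>u\<bar>"
      by (simp add: order_trans[OF abs_osc_le])
    show "((\<lambda>u. \<bar>u\<bar>) \<longlongrightarrow> 0) (at (0::real))"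
      using tendsto_rabs[OF tendsto_ident_at[of "0::real" UNIV]] by simp
  qed
  with True show ?thesis
    by (simp add: isCont_def osc_def)
next
  case False
  then show ?thesis
    unfolding osc_def[abs_def] by (intro continuous_intros) auto
qed

lemma continuous_on_osc: "continuous_on S osc"
  by (simp add: continuous_at_imp_continuous_on isCont_osc)

lemma osc_sq_le:
  assumes "t \<in> {0..1}"
  shows "(osc t)\<^sup>2 \<le> 1 / 4"
proof -
  have "\<bar>osc t\<bar> \<le> \<bar>1 / 2\<bar>"
    using abs_osc_le[of t] assms by auto
  then show ?thesis
    unfolding abs_le_square_iff by (simp add: power_one_over)
qed

lemma osc_curve_nth_has_derivative:
  assumes "t \<in> {0..1}"
  shows "((\<lambda>t. osc_curve t $ 1) has_real_derivative sqrt (1 - (osc t)\<^sup>2)) (at t within {0..1})"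
    and "((\<lambda>t. osc_curve t $ 2) has_real_derivative osc t) (at t within {0..1})"
proof -
  have "continuous_on {0..1} (\<lambda>u. sqrt (1 - (osc u)\<^sup>2))"
    by (intro continuous_intros continuous_on_osc)
  from integral_has_vector_derivative[OF this assms]
  show "((\<lambda>t. osc_curve t $ 1) has_real_derivative sqrt (1 - (osc t)\<^sup>2)) (at t within {0..1})"
    by (simp add: osc_curve_def has_real_derivative_iff_has_vector_derivative)
  from integral_has_vector_derivative[OF continuous_on_osc assms]
  show "((\<lambda>t. osc_curve t $ 2) has_real_derivative osc t) (at t within {0..1})"
    by (simp add: osc_curve_def has_real_derivative_iff_has_vector_derivative)
qed

lemma osc_curve_has_vector_derivative:
  assumes "t \<in> {0..1}"
  shows "(osc_curve has_vector_derivative vector [sqrt (1 - (osc t)\<^sup>2), osc t]) (at t within {0..1})"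
proof -
  have "osc_curve = (\<lambda>t. vector [osc_curve t $ 1, osc_curve t $ 2])"
    by (simp add: fun_eq_iff osc_curve_def)
  then show ?thesis
    using has_vector_derivative_vector_2[OF osc_curve_nth_has_derivative[OF assms]] by metis
qed

lemma norm_osc_velocity:
  "t \<in> {0..1} \<Longrightarrow> norm (vector [sqrt (1 - (osc t)\<^sup>2), osc t] :: real^2) = 1"
  using osc_sq_le[of t] by (simp add: norm_vector_2)

lemma continuous_on_osc_velocity:
  "continuous_on {0..1} (\<lambda>t. vector [sqrt (1 - (osc t)\<^sup>2), osc t] :: real^2)"
  unfolding vector_2_eq_axis by (intro continuous_intros continuous_on_osc)

lemma osc_curve_lipschitz:
  "x \<in> {0..1} \<Longrightarrow> y \<in> {0..1} \<Longrightarrow> dist (osc_curve x) (osc_curve y) \<le> \<bar>y - x\<bar>"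
  using dist_le_of_speed_le_1[OF osc_curve_has_vector_derivative] norm_osc_velocity by simp

lemma inj_on_osc_curve: "inj_on osc_curve {0..1}"
proof (rule linorder_inj_onI')
  fix x y :: real
  assume "x \<in> {0..1}" "y \<in> {0..1}" "x < y"
  have "(y - x) * (1 / 2) \<le> osc_curve y $ 1 - osc_curve x $ 1"
  proof (rule increment_ge_of_deriv_ge[OF osc_curve_nth_has_derivative(1) \<open>x < y\<close>])
    show "1 / 2 \<le> sqrt (1 - (osc t)\<^sup>2)" if "t \<in> {x<..<y}" for t
      using osc_sq_le[of t] that \<open>x \<in> {0..1}\<close> \<open>y \<in> {0..1}\<close>
      by (intro real_le_rsqrt) (auto simp: power_one_over)
  qed (use \<open>x \<in> {0..1}\<close> \<open>y \<in> {0..1}\<close> in auto)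
  with \<open>x < y\<close> show "osc_curve x \<noteq> osc_curve y"
    by auto
qed

section \<open>The caps at the parameters 1 / (2 k)\<close>

lemma inverse_bounds:
  fixes a b t :: real
  assumes "0 < a" "a \<le> b" "1 / b \<le> t" "t \<le> 1 / a"
  shows "0 < t" "a \<le> 1 / t" "1 / t \<le> b"
proof -
  show "0 < t"
    using assms order_less_le_trans[of 0 "1 / b" t] by simp
  then show "a \<le> 1 / t" "1 / t \<le> b"
    using assms by (simp_all add: field_simps)
qed

lemma sin_pi_ge_half:
  assumes "1 / 6 \<le> r" "r \<le> 5 / 6"
  shows "1 / 2 \<le> sin (pi * r)"
proof -
  have "sin (pi / 6) \<le> sin (pi * min r (1 - r))"
    using assms by (intro sin_monotone_2pi_le) (auto simp: field_simps min_def)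
  moreover have "sin (pi * (1 - r)) = sin (pi * r)"
    by (simp add: algebra_simps sin_diff)
  ultimately show ?thesis
    by (simp add: sin_30 min_def split: if_splits)
qed

lemma osc_eq_shifted: "osc t = t * sin (pi * (1 / t - 2 * real k)) / 2"
proof -
  have "sin (pi * (1 / t - 2 * real k)) = sin (pi / t - 2 * real k * pi)"
    by (simp add: algebra_simps)
  then show ?thesis
    by (simp add: osc_def sin_diff)
qed

lemma osc_ge_quarter:
  assumes "0 < t" "2 * real k + 1 / 6 \<le> 1 / t" "1 / t \<le> 2 * real k + 5 / 6"
  shows "t / 4 \<le> osc t"
  using mult_left_mono[OF sin_pi_ge_half[of "1 / t - 2 * real k"], of t] assms
  by (simp add: osc_eq_shifted[of t k])

lemma osc_nonneg:
  assumes "0 < t" "2 * real k \<le> 1 / t" "1 / t \<le> 2 * real k + 1"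
  shows "0 \<le> osc t"
  using sin_ge_zero[of "pi * (1 / t - 2 * real k)"] assms
  by (simp add: osc_eq_shifted[of t k])

lemma osc_eq_shifted_neg: "osc t = - (t * sin (pi * (2 * real k - 1 / t)) / 2)"
  using osc_eq_shifted[of t k] sin_minus[of "pi * (2 * real k - 1 / t)"]
  by (simp add: algebra_simps)

lemma osc_le_neg_quarter:
  assumes "0 < t" "2 * real k - 5 / 6 \<le> 1 / t" "1 / t \<le> 2 * real k - 1 / 6"
  shows "osc t \<le> - t / 4"
  using mult_left_mono[OF sin_pi_ge_half[of "2 * real k - 1 / t"], of t] assms
  by (simp add: osc_eq_shifted_neg[of t k])

lemma osc_nonpos:
  assumes "0 < t" "2 * real k - 1 \<le> 1 / t" "1 / t \<le> 2 * real k"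
  shows "osc t \<le> 0"
  using sin_ge_zero[of "pi * (2 * real k - 1 / t)"] assms
  by (simp add: osc_eq_shifted_neg[of t k])

lemma cap_height_left:
  fixes m :: real assumes "2 \<le> m"
  shows "1 / (48 * m ^ 3) \<le> (1 / (m + 1 / 6) - 1 / (m + 5 / 6)) * (1 / (m + 5 / 6) / 4)"
proof -
  have "(m + 1 / 6) * (m + 5 / 6) * (m + 5 / 6) \<le> (2 * m) * (2 * m) * (2 * m)"
    using assms by (intro mult_mono) auto
  then have "1 / (48 * m ^ 3) \<le> 1 / (6 * ((m + 1 / 6) * (m + 5 / 6) * (m + 5 / 6)))"
    using assms by (intro divide_left_mono) (auto simp: power3_eq_cube mult_ac)
  also have "\<dots> = (1 / (m + 1 / 6) - 1 / (m + 5 / 6)) * (1 / (m + 5 / 6) / 4)"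
    using assms by (simp add: divide_simps)
  finally show ?thesis .
qed

lemma cap_height_right:
  fixes m :: real assumes "2 \<le> m"
  shows "1 / (48 * m ^ 3) \<le> (1 / (m - 5 / 6) - 1 / (m - 1 / 6)) * (1 / (m - 1 / 6) / 4)"
proof -
  have "(m - 5 / 6) * (m - 1 / 6) * (m - 1 / 6) \<le> (2 * m) * (2 * m) * (2 * m)"
    using assms by (intro mult_mono) auto
  then have "1 / (48 * m ^ 3) \<le> 1 / (6 * ((m - 5 / 6) * (m - 1 / 6) * (m - 1 / 6)))"
    using assms by (intro divide_left_mono) (auto simp: power3_eq_cube mult_ac)
  also have "\<dots> = (1 / (m - 5 / 6) - 1 / (m - 1 / 6)) * (1 / (m - 1 / 6) / 4)"
    using assms by (simp add: divide_simps)
  finally show ?thesis .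
qed

lemma cap_width_left:
  fixes m :: real assumes "2 \<le> m"
  shows "1 / m - 1 / (m + 5 / 6) \<le> 2 / m\<^sup>2"
proof -
  have "1 / m - 1 / (m + 5 / 6) = (5 / 6) / (m * (m + 5 / 6))"
    using assms by (simp add: field_simps)
  also have "\<dots> \<le> 2 / (m * m)"
    using assms by (intro frac_le mult_mono) auto
  finally show ?thesis
    by (simp add: power2_eq_square)
qed

lemma cap_width_right:
  fixes m :: real assumes "2 \<le> m"
  shows "1 / (m - 5 / 6) - 1 / m \<le> 2 / m\<^sup>2"
proof -
  have "1 / (m - 5 / 6) - 1 / m = (5 / 6) / (m * (m - 5 / 6))"
    using assms by (simp add: field_simps)
  also have "\<dots> \<le> (5 / 3) / (m * m)"
    using assms by (simp add: field_simps)
  also have "\<dots> \<le> 2 / (m * m)"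
    using assms by (intro divide_right_mono) auto
  finally show ?thesis
    by (simp add: power2_eq_square)
qed

lemma osc_curve_rise_left:
  fixes k :: nat
  assumes "1 \<le> k"
  defines "m \<equiv> 2 * real k"
  shows "1 / (48 * m ^ 3) \<le> osc_curve (1 / m) $ 2 - osc_curve (1 / (m + 5 / 6)) $ 2"
proof -
  let ?y = "\<lambda>t. osc_curve t $ 2"
  define p q t where "p = 1 / (m + 5 / 6)" and "q = 1 / (m + 1 / 6)" and "t = 1 / m"
  have m: "2 \<le> m"
    using assms by simp
  have ord: "0 < p" "p < q" "q < t" "t \<le> 1"
    using m by (auto simp: p_def q_def t_def frac_less2 divide_le_eq)
  have "(q - p) * (p / 4) \<le> ?y q - ?y p"
  proof (rule increment_ge_of_deriv_ge[OF osc_curve_nth_has_derivative(2) \<open>p < q\<close>])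
    fix u assume "u \<in> {p<..<q}"
    with m have "0 < u" "m + 1 / 6 \<le> 1 / u" "1 / u \<le> m + 5 / 6"
      using inverse_bounds[of "m + 1 / 6" "m + 5 / 6" u] by (auto simp: p_def q_def)
    with \<open>u \<in> {p<..<q}\<close> show "p / 4 \<le> osc u"
      using osc_ge_quarter[of u k] by (auto simp: m_def)
  qed (use ord in auto)
  moreover have "(t - q) * 0 \<le> ?y t - ?y q"
  proof (rule increment_ge_of_deriv_ge[OF osc_curve_nth_has_derivative(2) \<open>q < t\<close>])
    fix u assume "u \<in> {q<..<t}"
    with m have "0 < u" "m \<le> 1 / u" "1 / u \<le> m + 1 / 6"
      using inverse_bounds[of m "m + 1 / 6" u] by (auto simp: q_def t_def)
    then show "0 \<le> osc u"
      using osc_nonneg[of u k] by (auto simp: m_def)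
  qed (use ord in auto)
  moreover have "1 / (48 * m ^ 3) \<le> (q - p) * (p / 4)"
    using cap_height_left[OF m] by (simp add: p_def q_def)
  ultimately show ?thesis
    by (simp add: p_def t_def)
qed

lemma osc_curve_rise_right:
  fixes k :: nat
  assumes "1 \<le> k"
  defines "m \<equiv> 2 * real k"
  shows "1 / (48 * m ^ 3) \<le> osc_curve (1 / m) $ 2 - osc_curve (1 / (m - 5 / 6)) $ 2"
proof -
  let ?y = "\<lambda>t. osc_curve t $ 2"
  define p q t where "p = 1 / (m - 1 / 6)" and "q = 1 / (m - 5 / 6)" and "t = 1 / m"
  have m: "2 \<le> m"
    using assms by simp
  have ord: "0 < t" "t < p" "p < q" "q \<le> 1"
    using m by (auto simp: p_def q_def t_def frac_less2 divide_le_eq)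
  have "?y p - ?y t \<le> (p - t) * 0"
  proof (rule increment_le_of_deriv_le[OF osc_curve_nth_has_derivative(2) \<open>t < p\<close>])
    fix u assume "u \<in> {t<..<p}"
    with m have "0 < u" "m - 1 / 6 \<le> 1 / u" "1 / u \<le> m"
      using inverse_bounds[of "m - 1 / 6" m u] by (auto simp: p_def t_def)
    then show "osc u \<le> 0"
      using osc_nonpos[of u k] by (auto simp: m_def)
  qed (use ord in auto)
  moreover have "?y q - ?y p \<le> (q - p) * - (p / 4)"
  proof (rule increment_le_of_deriv_le[OF osc_curve_nth_has_derivative(2) \<open>p < q\<close>])
    fix u assume "u \<in> {p<..<q}"
    with m have "0 < u" "m - 5 / 6 \<le> 1 / u" "1 / u \<le> m - 1 / 6"
      using inverse_bounds[of "m - 5 / 6" "m - 1 / 6" u] by (auto simp: p_def q_def)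
    with \<open>u \<in> {p<..<q}\<close> show "osc u \<le> - (p / 4)"
      using osc_le_neg_quarter[of u k] by (auto simp: m_def)
  qed (use ord in auto)
  moreover have "1 / (48 * m ^ 3) \<le> (q - p) * (p / 4)"
    using cap_height_right[OF m] by (simp add: p_def q_def)
  ultimately show ?thesis
    unfolding t_def[symmetric] q_def[symmetric] by simp
qed

lemma osc_curve_cap_condition:
  assumes "x \<in> {0..1}" "t \<in> {0..1}" "\<bar>t - x\<bar> \<le> w" "0 < D" "w\<^sup>2 < D * h"
    and "h \<le> osc_curve t $ 2 - osc_curve x $ 2"
  shows "(dist (osc_curve x) (osc_curve t))\<^sup>2 < D * ((osc_curve t - osc_curve x) \<bullet> axis 2 1)"
proof -
  have "dist (osc_curve x) (osc_curve t) \<le> w"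
    using osc_curve_lipschitz[OF assms(1,2)] assms(3) by simp
  then have "(dist (osc_curve x) (osc_curve t))\<^sup>2 \<le> w\<^sup>2"
    by (simp add: power_mono)
  also have "\<dots> < D * h"
    by fact
  also have "\<dots> \<le> D * ((osc_curve t - osc_curve x) \<bullet> axis 2 1)"
    using mult_left_mono[OF assms(6), of D] \<open>0 < D\<close> by (simp add: inner_axis)
  finally show ?thesis .
qed

lemma osc_curve_not_R_monotone:
  assumes "0 < R"
  shows "\<not> R_monotone R osc_curve 1"
proof -
  obtain k :: nat where k: "200 / R < real k"
    using reals_Archimedean2 by blast
  then have "1 \<le> k"
    using \<open>0 < R\<close> by (cases k) (auto simp: field_simps)
  define m where "m = 2 * real k"
  define D where "D = 400 / m"
  define p t q where "p = 1 / (m + 5 / 6)" and "t = 1 / m" and "q = 1 / (m - 5 / 6)"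
  have m: "2 \<le> m"
    using \<open>1 \<le> k\<close> by (simp add: m_def)
  have "0 < D" "D \<le> R"
    using k m \<open>0 < R\<close> by (auto simp: D_def m_def field_simps)
  have ord: "0 \<le> p" "p < t" "t < q" "q \<le> 1"
    using m by (auto simp: p_def t_def q_def frac_less2 divide_le_eq)
  have "(2 / m\<^sup>2)\<^sup>2 < D * (1 / (48 * m ^ 3))"
    using m by (simp add: D_def field_simps power2_eq_square power3_eq_cube)
  have "t - p \<le> 2 / m\<^sup>2" "q - t \<le> 2 / m\<^sup>2"
    using cap_width_left[OF m] cap_width_right[OF m] by (simp_all add: p_def t_def q_def)
  show ?thesis
  proof (rule not_R_monotone_if_cap[OF norm_axis_1 \<open>0 < D\<close> \<open>D \<le> R\<close> ord])
    show "(dist (osc_curve p) (osc_curve t))\<^sup>2 < D * ((osc_curve t - osc_curve p) \<bullet> axis 2 1)"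
    proof (rule osc_curve_cap_condition)
      show "1 / (48 * m ^ 3) \<le> osc_curve t $ 2 - osc_curve p $ 2"
        using osc_curve_rise_left[OF \<open>1 \<le> k\<close>] by (simp add: p_def t_def m_def)
    qed (use ord \<open>t - p \<le> 2 / m\<^sup>2\<close> \<open>0 < D\<close> \<open>(2 / m\<^sup>2)\<^sup>2 < _\<close> in auto)
    show "(dist (osc_curve q) (osc_curve t))\<^sup>2 < D * ((osc_curve t - osc_curve q) \<bullet> axis 2 1)"
    proof (rule osc_curve_cap_condition)
      show "1 / (48 * m ^ 3) \<le> osc_curve t $ 2 - osc_curve q $ 2"
        using osc_curve_rise_right[OF \<open>1 \<le> k\<close>] by (simp add: q_def t_def m_def)
    qed (use ord \<open>q - t \<le> 2 / m\<^sup>2\<close> \<open>0 < D\<close> \<open>(2 / m\<^sup>2)\<^sup>2 < _\<close> in auto)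
  qed
qed

theorem mainTheorem2:
  shows "\<exists>(s :: real \<Rightarrow> real^2) L.
           0 < L \<and>
           arc_length_param s L \<and>
           continuous_on {0..L} s \<and>
           (\<forall>t \<in> {0..L}. s differentiable (at t within {0..L})) \<and>
           inj_on s {0..L} \<and>
           (\<forall>R > 0. \<not> R_monotone R s L)"
proof (intro exI[of _ osc_curve] exI[of _ "1::real"] conjI)
  show "arc_length_param osc_curve 1"
    using osc_curve_has_vector_derivative continuous_on_osc_velocity norm_osc_velocity
    by (rule arc_length_param_of_unit_speed)
  show "continuous_on {0..1} osc_curve"
    using osc_curve_has_vector_derivative has_vector_derivative_continuous
      continuous_on_eq_continuous_within by blast
  show "\<forall>t\<in>{0..1}. osc_curve differentiable (at t within {0..1})"
    using osc_curve_has_vector_derivative differentiableI_vector by blast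
  show "\<forall>R>0. \<not> R_monotone R osc_curve 1"
    using osc_curve_not_R_monotone by blast
qed (simp_all add: inj_on_osc_curve)

end
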